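(* Let $M\ge1$ and let $q>q_T$ be such that $\alpha(q)=a_1a_2\dots$ is irreducible and $a_1=M$. Then there is a strictly increasing sequence $(m_j)_{j\ge1}$ of positive integers with the following properties: - $a_1\dots a_{m_j}^-$ is fundamental for each $j$; - $m_{j+1}\le 2m_j$ for every $j$; - $m_1=2$ if $M=1$, and $m_1=1$ if $M\ge2$.
   Context: Sequences and word operations. $\Omega_M=\{0,\dots,M\}^{\mathbb N}$, with lexicographic order $\prec$ and left shift $\sigma$; words are compared via $\mathbf c\prec\mathbf d$ iff $\mathbf c0^\infty\prec\mathbf d0^\infty$. For a word $c_1\dots c_k$: - $c_1\dots c_k^\pm=c_1\dots c_{k-1}(c_k\pm1)$; - $\overline{c_1\dots c_k}=(M-c_1)\dots(M-c_k)$, and $\overline{(c_i)}=(M-c_i)$. Quasi-greedy expansion. For $q\in(1,M+1]$, $\alpha(q)$ is the lexicographically largest $(a_i)\in\Omega_M$ not ending in $0^\infty$ with $\sum a_iq^{-i}=1$. Irreducible sequences. Let $\mathbf V=\{(c_i):\overline{(c_i)}\preceq\sigma^n((c_i))\preceq(c_i)\ \forall n\ge0\}$. $(a_i)\in\mathbf V$ is irreducible if for every $j$: whenever $a_j>0$ and $(a_1\dots a_j^-)^\infty\in\mathbf V$, we have $a_1\dots a_j(\overline{a_1\dots a_j}^+)^\infty\prec(a_i)$. Fundamental words. A word $a_1\dots a_m$ ($m\ge2$) is fundamental if $\overline{a_1\dots a_{m-i}}\preceq a_{i+1}\dots a_m\prec a_1\dots a_{m-i}$ for $1\le i<m$. When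 $M\ge2$, a letter $a_1$ is fundamental if $M-a_1\le a_1<M$. The base $q_T$. Let $\tau_i$ be the parity of the binary digit sum of $i\ge0$. Put $\lambda_i=k+\tau_i-\tau_{i-1}$ if $M=2k$, and $\lambda_i=k+\tau_i$ if $M=2k+1$. Then $\alpha(q_T)=\lambda_1\dots\lambda_N(\overline{\lambda_1\dots\lambda_N}^+)^\infty$ with $N=1$ for even $M$ and $N=2$ for odd $M$. (Equivalently, $\alpha(q_T)=(k+1)(k-1)^\infty$ for $M=2k$, and $\alpha(q_T)=(k+1)(k+1)(kk)^\infty$ for $M=2k+1$.) *)

theory Defs
  imports Complex_Main
begin

text \<open>Conventions: sequences in Omega_M are functions nat => nat, indexed from 0,
  so that the paper's c_1 c_2 ... is c 0, c 1, ...  Words are lists of naturals.\<close>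

definition in_Omega :: "nat \<Rightarrow> (nat \<Rightarrow> nat) \<Rightarrow> bool" where
  "in_Omega M c \<longleftrightarrow> (\<forall>i. c i \<le> M)"

definition lex_less :: "(nat \<Rightarrow> nat) \<Rightarrow> (nat \<Rightarrow> nat) \<Rightarrow> bool" where
  "lex_less c d \<longleftrightarrow> (\<exists>n. (\<forall>i<n. c i = d i) \<and> c n < d n)"

definition lex_le :: "(nat \<Rightarrow> nat) \<Rightarrow> (nat \<Rightarrow> nat) \<Rightarrow> bool" where
  "lex_le c d \<longleftrightarrow> lex_less c d \<or> c = d"

definition shift :: "(nat \<Rightarrow> nat) \<Rightarrow> nat \<Rightarrow> (nat \<Rightarrow> nat)" where
  "shift c n = (\<lambda>i. c (i + n))"

definition pad0 :: "nat list \<Rightarrow> (nat \<Rightarrow> nat)" where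
  "pad0 w = (\<lambda>i. if i < length w then w ! i else 0)"

definition word_less :: "nat list \<Rightarrow> nat list \<Rightarrow> bool" where
  "word_less u v \<longleftrightarrow> lex_less (pad0 u) (pad0 v)"

definition word_le :: "nat list \<Rightarrow> nat list \<Rightarrow> bool" where
  "word_le u v \<longleftrightarrow> lex_le (pad0 u) (pad0 v)"

definition wbar :: "nat \<Rightarrow> nat list \<Rightarrow> nat list" where
  "wbar M w = map (\<lambda>x. M - x) w"

definition sbar :: "nat \<Rightarrow> (nat \<Rightarrow> nat) \<Rightarrow> (nat \<Rightarrow> nat)" where
  "sbar M c = (\<lambda>i. M - c i)"

definition wplus :: "nat list \<Rightarrow> nat list" where
  "wplus w = butlast w @ [last w + 1]"

definition wminus :: "nat list \<Rightarrow> nat list" where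
  "wminus w = butlast w @ [last w - 1]"

definition prefix_word :: "(nat \<Rightarrow> nat) \<Rightarrow> nat \<Rightarrow> nat list" where
  "prefix_word a n = map a [0..<n]"

definition per :: "nat list \<Rightarrow> (nat \<Rightarrow> nat)" where
  "per w = (\<lambda>i. w ! (i mod length w))"

definition conc :: "nat list \<Rightarrow> (nat \<Rightarrow> nat) \<Rightarrow> (nat \<Rightarrow> nat)" where
  "conc u v = (\<lambda>i. if i < length u then u ! i else v (i - length u))"

text \<open>Quasi-greedy expansion: alpha_exp M q a means alpha(q) = a.\<close>
definition expansion_of_one :: "nat \<Rightarrow> real \<Rightarrow> (nat \<Rightarrow> nat) \<Rightarrow> bool" where
  "expansion_of_one M q a \<longleftrightarrow> in_Omega M a \<and> (\<forall>n. \<exists>i\<ge>n. a i \<noteq> 0)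
     \<and> (\<lambda>i. real (a i) / q ^ Suc i) sums 1"

definition alpha_exp :: "nat \<Rightarrow> real \<Rightarrow> (nat \<Rightarrow> nat) \<Rightarrow> bool" where
  "alpha_exp M q a \<longleftrightarrow> 1 < q \<and> q \<le> real M + 1 \<and> expansion_of_one M q a
     \<and> (\<forall>b. expansion_of_one M q b \<longrightarrow> lex_le b a)"

definition in_V :: "nat \<Rightarrow> (nat \<Rightarrow> nat) \<Rightarrow> bool" where
  "in_V M c \<longleftrightarrow> (\<forall>n. lex_le (sbar M c) (shift c n) \<and> lex_le (shift c n) c)"

definition irreducible_seq :: "nat \<Rightarrow> (nat \<Rightarrow> nat) \<Rightarrow> bool" where
  "irreducible_seq M a \<longleftrightarrow> in_V M a \<and>
     (\<forall>j\<ge>1. a (j - 1) > 0 \<and> in_V M (per (wminus (prefix_word a j))) \<longrightarrow>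
        lex_less (conc (prefix_word a j) (per (wplus (wbar M (prefix_word a j))))) a)"

definition fundamental :: "nat \<Rightarrow> nat list \<Rightarrow> bool" where
  "fundamental M w \<longleftrightarrow>
     (length w \<ge> 2 \<and>
       (\<forall>i. 1 \<le> i \<and> i < length w \<longrightarrow>
          word_le (wbar M (take (length w - i) w)) (drop i w) \<and>
          word_less (drop i w) (take (length w - i) w)))
   \<or> (length w = 1 \<and> M \<ge> 2 \<and> M - w ! 0 \<le> w ! 0 \<and> w ! 0 < M)"

fun bitsum :: "nat \<Rightarrow> nat" where
  "bitsum n = (if n = 0 then 0 else n mod 2 + bitsum (n div 2))"

definition tau :: "nat \<Rightarrow> int" where
  "tau i = int (bitsum i mod 2)"

definition lam :: "nat \<Rightarrow> nat \<Rightarrow> nat" where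
  "lam M i = (if even M then nat (int (M div 2) + tau i - tau (i - 1))
              else nat (int (M div 2) + tau i))"

definition lamN :: "nat \<Rightarrow> nat" where
  "lamN M = (if even M then 1 else 2)"

definition alphaT :: "nat \<Rightarrow> (nat \<Rightarrow> nat)" where
  "alphaT M = (let w = map (lam M) [1..<lamN M + 1] in conc w (per (wplus (wbar M w))))"

definition qT :: "nat \<Rightarrow> real" where
  "qT M = (THE q. alpha_exp M q (alphaT M))"

end

theory Submission
  imports Defs
begin

(* Call m admissible if a_m > 0 and a_1 ... a_m^- is fundamental.  For a in V with a_m > 0 and
   m >= 2, this holds iff a_1 ... a_m has no reflected border, i.e. no 0 < i < m with
   a_(i+1) ... a_m = bar(a_1 ... a_(m-i)).
   Let m be admissible.  Then (a_1 ... a_m^-)^infinity lies in V, so irreducibility says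
   a_1 ... a_m (bar(a_1 ... a_m)^+)^infinity < a; hence a_(m+1) ... a_(2m) is not
   bar(a_1 ... a_m).  Let k be the first position where they differ; a_(m+k) is the larger
   letter because bar(a) <= sigma^m(a).  Then m + k is admissible and m < m + k <= 2m, and
   iterating gives the sequence.
   The start m_1 = 1 is immediate for M >= 2.  For M = 1 we need a_2 = 1: if a_1 a_2 = 10,
   then a in V forces a = (10)^infinity, so q is the golden ratio.  But the value of
   alpha(q_T) = 1(10)^infinity in base q is then 2/q > 1, and values decrease as the base
   grows, so q < q_T. *)

definition lex_less_at :: "(nat \<Rightarrow> nat) \<Rightarrow> (nat \<Rightarrow> nat) \<Rightarrow> nat \<Rightarrow> bool" where
  "lex_less_at x y p \<longleftrightarrow> (\<forall>k<p. x k = y k) \<and> x p < y p"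

lemma lex_less_iff_at: "lex_less x y \<longleftrightarrow> (\<exists>p. lex_less_at x y p)"
  by (simp add: lex_less_def lex_less_at_def)

lemma lex_less_at_asym: "lex_less_at x y p \<Longrightarrow> \<not> lex_less_at y x p'"
  unfolding lex_less_at_def by (metis linorder_neqE_nat not_less_iff_gr_or_eq)

lemma lex_le_iff_not_less: "lex_le x y \<longleftrightarrow> \<not> lex_less y x"
proof
  assume "lex_le x y"
  then show "\<not> lex_less y x"
    unfolding lex_le_def lex_less_iff_at
    using lex_less_at_asym by (metis lex_less_at_def less_irrefl)
next
  assume not_less: "\<not> lex_less y x"
  show "lex_le x y"
  proof (rule ccontr)
    assume "\<not> lex_le x y"
    then have "\<exists>k. x k \<noteq> y k" by (auto simp: lex_le_def)
    then obtain p where p: "x p \<noteq> y p" "\<forall>k<p. x k = y k"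
      using exists_least_iff[of "\<lambda>k. x k \<noteq> y k"] by blast
    then have "lex_less_at x y p \<or> lex_less_at y x p"
      by (auto simp: lex_less_at_def)
    with not_less \<open>\<not> lex_le x y\<close> show False
      by (auto simp: lex_le_def lex_less_iff_at)
  qed
qed

lemma lex_le_first_difference:
  assumes "lex_le x y" "\<forall>k<p. x k = y k" "x p \<noteq> y p"
  shows "x p < y p"
proof (rule ccontr)
  assume "\<not> x p < y p"
  with assms have "lex_less_at y x p" by (auto simp: lex_less_at_def)
  with assms(1) show False by (auto simp: lex_le_iff_not_less lex_less_iff_at)
qed

lemma lex_le_second_letter: "lex_le x y \<Longrightarrow> x 0 = y 0 \<Longrightarrow> x 1 \<le> y 1"
  using lex_le_first_difference[of x y 1] by (cases "x 1 = y 1") auto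

lemma lex_le_prefix_cases:
  "lex_le x y \<Longrightarrow> (\<forall>k<L. x k = y k) \<or> (\<exists>p<L. lex_less_at x y p)"
  unfolding lex_le_def lex_less_iff_at lex_less_at_def by (metis not_less order.strict_trans2)

lemma shift_shift: "shift (shift x m) n = shift x (m + n)"
  by (simp add: shift_def add.commute add.left_commute)

lemma word_less_same_length:
  assumes "length u = L" "length w = L"
  shows "word_less u w \<longleftrightarrow> (\<exists>p<L. (\<forall>k<p. u!k = w!k) \<and> u!p < w!p)"
proof
  assume "word_less u w"
  then obtain p where p: "lex_less_at (pad0 u) (pad0 w) p"
    by (auto simp: word_less_def lex_less_iff_at)
  with assms have "p < L" by (auto simp: lex_less_at_def pad0_def split: if_splits)
  with p assms show "\<exists>p<L. (\<forall>k<p. u!k = w!k) \<and> u!p < w!p"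
    by (intro exI[of _ p]) (auto simp: lex_less_at_def pad0_def)
next
  assume "\<exists>p<L. (\<forall>k<p. u!k = w!k) \<and> u!p < w!p"
  then obtain p where "p < L" "\<forall>k<p. u!k = w!k" "u!p < w!p" by blast
  with assms have "lex_less_at (pad0 u) (pad0 w) p" by (auto simp: lex_less_at_def pad0_def)
  then show "word_less u w" by (auto simp: word_less_def lex_less_iff_at)
qed

lemma word_le_same_length:
  assumes "length u = L" "length w = L"
  shows "word_le u w \<longleftrightarrow> word_less u w \<or> (\<forall>k<L. u!k = w!k)"
proof -
  have "pad0 u = pad0 w \<longleftrightarrow> (\<forall>k<L. u!k = w!k)"
    using assms by (auto simp: pad0_def fun_eq_iff)
  then show ?thesis by (simp add: word_le_def word_less_def lex_le_def)
qed

definition suffix_less_prefix :: "nat list \<Rightarrow> nat \<Rightarrow> bool" where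
  "suffix_less_prefix v i \<longleftrightarrow>
     (\<exists>p<length v - i. (\<forall>k<p. v!(i+k) = v!k) \<and> v!(i+p) < v!p)"

definition bar_prefix_le_suffix :: "nat \<Rightarrow> nat list \<Rightarrow> nat \<Rightarrow> bool" where
  "bar_prefix_le_suffix M v i \<longleftrightarrow>
     (\<exists>p<length v - i. (\<forall>k<p. M - v!k = v!(i+k)) \<and> M - v!p < v!(i+p))
     \<or> (\<forall>k<length v - i. M - v!k = v!(i+k))"

lemma fundamental_iff:
  assumes "length v \<ge> 2"
  shows "fundamental M v \<longleftrightarrow>
    (\<forall>i. 1 \<le> i \<and> i < length v \<longrightarrow> bar_prefix_le_suffix M v i \<and> suffix_less_prefix v i)"
proof -
  have "word_le (wbar M (take (length v - i) v)) (drop i v) \<longleftrightarrow> bar_prefix_le_suffix M v i"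
       "word_less (drop i v) (take (length v - i) v) \<longleftrightarrow> suffix_less_prefix v i"
    if "i < length v" for i
  proof -
    have len: "length (wbar M (take (length v - i) v)) = length v - i"
      "length (drop i v) = length v - i" "length (take (length v - i) v) = length v - i"
      using that by (auto simp: wbar_def)
    show "word_le (wbar M (take (length v - i) v)) (drop i v) \<longleftrightarrow> bar_prefix_le_suffix M v i"
      unfolding word_le_same_length[OF len(1,2)] word_less_same_length[OF len(1,2)]
        bar_prefix_le_suffix_def by (auto simp: wbar_def)
    show "word_less (drop i v) (take (length v - i) v) \<longleftrightarrow> suffix_less_prefix v i"
      unfolding word_less_same_length[OF len(2,3)] suffix_less_prefix_def by auto
  qed
  with assms show ?thesis unfolding fundamental_def by auto
qed

lemma
  assumes "1 \<le> m"
  shows length_wminus_prefix: "length (wminus (prefix_word a m)) = m"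
    and nth_wminus_prefix:
      "k < m \<Longrightarrow> wminus (prefix_word a m) ! k = (if k = m - 1 then a k - 1 else a k)"
proof -
  obtain m' where m: "m = Suc m'" using assms by (cases m) auto
  then have "prefix_word a m = map a [0..<m'] @ [a m']" by (simp add: prefix_word_def)
  with m show "length (wminus (prefix_word a m)) = m"
    and "k < m \<Longrightarrow> wminus (prefix_word a m) ! k = (if k = m - 1 then a k - 1 else a k)"
    by (auto simp: wminus_def nth_append)
qed

lemma
  assumes "w \<noteq> []"
  shows length_wplus: "length (wplus w) = length w"
    and nth_wplus: "k < length w \<Longrightarrow> wplus w ! k = (if k = length w - 1 then w!k + 1 else w!k)"
  using assms by (auto simp: wplus_def nth_append nth_butlast last_conv_nth)

lemma per_periodic: "w \<noteq> [] \<Longrightarrow> per w (x + length w) = per w x"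
  by (simp add: per_def)

lemma shift_per_mod: "w \<noteq> [] \<Longrightarrow> shift (per w) n = shift (per w) (n mod length w)"
  by (auto simp: shift_def per_def fun_eq_iff mod_add_right_eq)

lemma per_nth: "k < length w \<Longrightarrow> per w k = w ! k"
  by (simp add: per_def)

lemma shift_per_nth: "i + k < length w \<Longrightarrow> shift (per w) i k = w ! (i + k)"
  by (simp add: shift_def per_def add.commute)

lemma fundamental_first_letter_gt_bar:
  assumes "fundamental M v" "length v \<ge> 2"
  shows "M - v!0 < v!0"
proof -
  have "1 \<le> length v - 1" "length v - 1 < length v" using assms(2) by auto
  with assms have "bar_prefix_le_suffix M v (length v - 1)" "suffix_less_prefix v (length v - 1)"
    by (simp_all add: fundamental_iff)
  then show ?thesis using assms(2) by (auto simp: bar_prefix_le_suffix_def suffix_less_prefix_def)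
qed

lemma lex_le_shift_per_fundamental:
  assumes "fundamental M v" "length v \<ge> 2"
  shows "lex_le (shift (per v) n) (per v)"
proof (cases "n mod length v = 0")
  case True
  have "v \<noteq> []" using assms(2) by auto
  with True show ?thesis
    using shift_per_mod[of v n] by (simp add: lex_le_def shift_def)
next
  case False
  define i where "i = n mod length v"
  have i: "1 \<le> i" "i < length v" using False assms(2) by (auto simp: i_def intro: mod_less_divisor)
  with assms obtain p where p: "p < length v - i" "\<forall>k<p. v!(i+k) = v!k" "v!(i+p) < v!p"
    by (auto simp: fundamental_iff suffix_less_prefix_def)
  then have "lex_less_at (shift (per v) i) (per v) p"
    by (auto simp: lex_less_at_def shift_per_nth per_nth)
  moreover have "v \<noteq> []" using assms(2) by auto
  ultimately show ?thesis
    using shift_per_mod[of v n] by (auto simp: i_def lex_le_def lex_less_iff_at)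
qed

lemma lex_less_at_sbar_reflect:
  assumes periodic: "\<And>x. P (x + m) = P x" and bounded: "\<And>k. P k \<le> M" and "i < m"
    and less: "lex_less_at (shift P i) (sbar M P) d"
    and reflected: "\<forall>k<m - i. shift P i k = sbar M P k"
  shows "m - i \<le> d" "lex_less_at (shift P (m - i)) (sbar M P) (d - (m - i))"
proof -
  show d: "m - i \<le> d"
    using less reflected by (metis lex_less_at_def less_irrefl not_le)
  have shift_eq: "shift P (m - i) j = sbar M P j \<longleftrightarrow> shift P i (j + (m - i)) = sbar M P (j + (m - i))"
    and shift_less: "shift P (m - i) j < sbar M P j \<longleftrightarrow> shift P i (j + (m - i)) < sbar M P (j + (m - i))"
    for j
  proof -
    have "shift P i (j + (m - i)) = P j" using periodic \<open>i < m\<close> by (simp add: shift_def add.assoc)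
    then show "shift P (m - i) j = sbar M P j \<longleftrightarrow> shift P i (j + (m - i)) = sbar M P (j + (m - i))"
      and "shift P (m - i) j < sbar M P j \<longleftrightarrow> shift P i (j + (m - i)) < sbar M P (j + (m - i))"
      using bounded[of j] bounded[of "j + (m - i)"] by (auto simp: shift_def sbar_def)
  qed
  show "lex_less_at (shift P (m - i)) (sbar M P) (d - (m - i))"
    using less d unfolding lex_less_at_def shift_eq shift_less by simp
qed

lemma periodic_not_lex_less_at_sbar:
  assumes periodic: "\<And>x. P (x + m) = P x" and bounded: "\<And>k. P k \<le> M"
    and first: "M - P 0 < P 0"
    and overlap: "\<And>i. 0 < i \<Longrightarrow> i < m \<Longrightarrow>
      (\<exists>p<m - i. lex_less_at (sbar M P) (shift P i) p) \<or> (\<forall>k<m - i. shift P i k = sbar M P k)"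
  shows "i < m \<Longrightarrow> \<not> lex_less_at (shift P i) (sbar M P) d"
proof (induction d arbitrary: i rule: less_induct)
  case (less d)
  show ?case
  proof
    assume less_i: "lex_less_at (shift P i) (sbar M P) d"
    show False
    proof (cases "i = 0")
      case True
      with less_i first show False by (cases d) (auto simp: lex_less_at_def sbar_def shift_def)
    next
      case False
      with overlap[of i] less.prems consider
          (strict) p where "lex_less_at (sbar M P) (shift P i) p"
        | (reflected) "\<forall>k<m - i. shift P i k = sbar M P k"
        by blast
      then show False
      proof cases
        case strict
        with less_i show False using lex_less_at_asym by blast
      next
        case reflected
        with lex_less_at_sbar_reflect[OF periodic bounded less.prems less_i]
        have "m - i \<le> d" and "lex_less_at (shift P (m - i)) (sbar M P) (d - (m - i))"
          by auto
        moreover have "d - (m - i) < d" "m - i < m" using less.prems \<open>i \<noteq> 0\<close> \<open>m - i \<le> d\<close> by auto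
        ultimately show False using less.IH by blast
      qed
    qed
  qed
qed

lemma lex_le_sbar_shift_per_fundamental:
  assumes fund: "fundamental M v" and len: "length v \<ge> 2" and bounded: "\<forall>k<length v. v!k \<le> M"
  shows "lex_le (sbar M (per v)) (shift (per v) n)"
proof -
  have "v \<noteq> []" using len by auto
  have "\<not> lex_less_at (shift (per v) j) (sbar M (per v)) d" if "j < length v" for j d
  proof (rule periodic_not_lex_less_at_sbar[OF _ _ _ _ that])
    show "per v (x + length v) = per v x" for x by (rule per_periodic[OF \<open>v \<noteq> []\<close>])
    show "per v k \<le> M" for k using bounded \<open>v \<noteq> []\<close> by (simp add: per_def)
    show "M - per v 0 < per v 0"
      using fundamental_first_letter_gt_bar[OF fund len] \<open>v \<noteq> []\<close> by (simp add: per_nth)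
    fix i assume i: "0 < i" "i < length v"
    with fund len have "bar_prefix_le_suffix M v i" by (simp add: fundamental_iff)
    then show "(\<exists>p<length v - i. lex_less_at (sbar M (per v)) (shift (per v) i) p)
      \<or> (\<forall>k<length v - i. shift (per v) i k = sbar M (per v) k)"
      by (auto simp: bar_prefix_le_suffix_def lex_less_at_def sbar_def shift_per_nth per_nth)
  qed
  then show ?thesis
    using shift_per_mod[OF \<open>v \<noteq> []\<close>, of n] \<open>v \<noteq> []\<close>
    by (simp add: lex_le_iff_not_less lex_less_iff_at)
qed

lemma in_V_per_fundamental:
  assumes "fundamental M v" "\<forall>k<length v. v!k \<le> M"
  shows "in_V M (per v)"
proof (cases "length v \<ge> 2")
  case True
  with assms show ?thesis
    by (simp add: in_V_def lex_le_shift_per_fundamental lex_le_sbar_shift_per_fundamental)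
next
  case False
  with assms have v: "length v = 1" "M - v!0 \<le> v!0" by (auto simp: fundamental_def)
  then have "per v = (\<lambda>_. v!0)" by (auto simp: per_def)
  moreover have "lex_le (\<lambda>_. M - v!0) (\<lambda>_. v!0 :: nat)"
    using v(2) by (cases "M - v!0 = v!0") (auto simp: lex_le_def lex_less_iff_at lex_less_at_def)
  ultimately show ?thesis by (simp add: in_V_def shift_def sbar_def lex_le_def)
qed

(* In the paper's 1-based notation: 0 < i < n and a_(i+1) ... a_n = bar(a_1 ... a_(n-i)). *)
definition reflected_border :: "nat \<Rightarrow> (nat \<Rightarrow> nat) \<Rightarrow> nat \<Rightarrow> nat \<Rightarrow> bool" where
  "reflected_border M a n i \<longleftrightarrow> 1 \<le> i \<and> i < n \<and> (\<forall>k<n - i. a (i + k) = M - a k)"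

lemma fundamental_imp_no_reflected_border:
  assumes "2 \<le> m" and pos: "a (m - 1) > 0" and fund: "fundamental M (wminus (prefix_word a m))"
  shows "\<not> reflected_border M a m i"
proof
  assume "reflected_border M a m i"
  then have i: "1 \<le> i" "i < m" and border: "\<forall>k<m - i. a (i + k) = M - a k"
    by (auto simp: reflected_border_def)
  define v where "v = wminus (prefix_word a m)"
  have len: "length v = m" using \<open>2 \<le> m\<close> by (simp add: v_def length_wminus_prefix)
  have v: "k < m \<Longrightarrow> v ! k = (if k = m - 1 then a k - 1 else a k)" for k
    using \<open>2 \<le> m\<close> by (simp add: v_def nth_wminus_prefix)
  have last: "M - v ! (m - 1 - i) > v ! (m - 1)"
  proof -
    have idx: "m - 1 - i < m - i" "i + (m - 1 - i) = m - 1" "m - 1 - i \<noteq> m - 1" using i by auto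
    then have "a (m - 1) = M - a (m - 1 - i)" using border by metis
    moreover have "v ! (m - 1 - i) = a (m - 1 - i)" using v[of "m - 1 - i"] idx by simp
    moreover have "v ! (m - 1) = a (m - 1) - 1" using v[of "m - 1"] i by simp
    ultimately show ?thesis using pos by presburger
  qed
  have "bar_prefix_le_suffix M v i"
    using fund fundamental_iff[of v M] i \<open>2 \<le> m\<close> by (simp add: len flip: v_def)
  then consider
      (strict) p where "p < m - i" "\<forall>k<p. M - v!k = v!(i+k)" "M - v!p < v!(i+p)"
    | (reflected) "\<forall>k<m - i. M - v!k = v!(i+k)"
    unfolding bar_prefix_le_suffix_def len by blast
  then show False
  proof cases
    case strict
    show False
    proof (cases "i + p = m - 1")
      case True
      then have "p = m - 1 - i" by simp
      with strict(3) True last show False by simp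
    next
      case False
      with strict(1) i have "v ! p = a p" "v ! (i + p) = a (i + p)" using v by auto
      with strict(1,3) border show False by simp
    qed
  next
    case reflected
    then have "M - v ! (m - 1 - i) = v ! (i + (m - 1 - i))" using i by simp
    with last i show False by simp
  qed
qed

lemma suffix_less_prefix_wminus_prefix:
  assumes "lex_le (shift a i) a" and "2 \<le> n" "1 \<le> i" "i < n" and pos: "a (n - 1) > 0"
  shows "suffix_less_prefix (wminus (prefix_word a n)) i"
proof -
  define v where "v = wminus (prefix_word a n)"
  have len: "length v = n" using \<open>2 \<le> n\<close> by (simp add: v_def length_wminus_prefix)
  have v: "k < n \<Longrightarrow> v ! k = (if k = n - 1 then a k - 1 else a k)" for k
    using \<open>2 \<le> n\<close> by (simp add: v_def nth_wminus_prefix)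
  from lex_le_prefix_cases[OF assms(1), of "n - i"] consider
      (periodic) "\<forall>k<n - i. a (i + k) = a k"
    | (strict) p where "p < n - i" "\<forall>k<p. a (i + k) = a k" "a (i + p) < a p"
    by (auto simp: shift_def lex_less_at_def add.commute)
  then show ?thesis
  proof cases
    case periodic
    define p where "p = n - 1 - i"
    have p: "p < n - i" "i + p = n - 1" "p \<noteq> n - 1" using assms(3,4) by (auto simp: p_def)
    have "\<forall>k<p. v!(i+k) = v!k" using periodic v p by auto
    moreover have "a (n - 1) = a p" using periodic p by metis
    then have "v!(i+p) < v!p" using v[of p] v[of "i+p"] p pos assms(4) by simp
    ultimately show ?thesis unfolding suffix_less_prefix_def len v_def[symmetric] using p by blast
  next
    case strict
    with v have "\<forall>k<p. v!(i+k) = v!k" "v!(i+p) < v!p" by auto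
    with strict show ?thesis unfolding suffix_less_prefix_def len v_def[symmetric] by blast
  qed
qed

lemma bar_prefix_le_suffix_wminus_prefix:
  assumes "lex_le (sbar M a) (shift a i)" and "2 \<le> n" "1 \<le> i" "i < n"
    and no_border: "\<not> reflected_border M a n i"
  shows "bar_prefix_le_suffix M (wminus (prefix_word a n)) i"
proof -
  define v where "v = wminus (prefix_word a n)"
  have len: "length v = n" using \<open>2 \<le> n\<close> by (simp add: v_def length_wminus_prefix)
  have v: "k < n \<Longrightarrow> v ! k = (if k = n - 1 then a k - 1 else a k)" for k
    using \<open>2 \<le> n\<close> by (simp add: v_def nth_wminus_prefix)
  from lex_le_prefix_cases[OF assms(1), of "n - i"] consider
      (reflected) "\<forall>k<n - i. a (i + k) = M - a k"
    | (strict) p where "p < n - i" "\<forall>k<p. M - a k = a (i + k)" "M - a p < a (i + p)"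
    by (auto simp: shift_def sbar_def lex_less_at_def add.commute)
  then show ?thesis
  proof cases
    case reflected
    with no_border assms(3,4) show ?thesis by (simp add: reflected_border_def)
  next
    case strict
    have before_p: "\<forall>k<p. M - v!k = v!(i+k)" using strict v by auto
    have "M - v!p < v!(i+p) \<or> (\<forall>k<n - i. M - v!k = v!(i+k))"
    proof (cases "i + p = n - 1")
      case False
      then show ?thesis using strict v by auto
    next
      case True
      have "p \<noteq> n - 1" using strict(1) assms(3) by linarith
      then have vp: "v!p = a p" "v!(i+p) = a (n-1) - 1"
        using strict v[of p] v[of "i+p"] assms(4) True by auto
      have "M - a p \<le> a (n-1) - 1" using strict(3) unfolding True by linarith
      with vp consider "M - v!p < v!(i+p)" | "M - v!p = v!(i+p)" by linarith
      then show ?thesis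
      proof cases
        case 2
        have "k < p \<or> k = p" if "k < n - i" for k using that True assms(3) by auto
        with before_p 2 show ?thesis by auto
      qed simp
    qed
    with strict before_p show ?thesis unfolding bar_prefix_le_suffix_def len v_def[symmetric] by blast
  qed
qed

lemma no_reflected_border_imp_fundamental:
  assumes V: "in_V M a" and "2 \<le> n" and pos: "a (n - 1) > 0"
    and no_border: "\<And>i. \<not> reflected_border M a n i"
  shows "fundamental M (wminus (prefix_word a n))"
  using assms length_wminus_prefix[of n a]
    suffix_less_prefix_wminus_prefix bar_prefix_le_suffix_wminus_prefix
  by (simp add: fundamental_iff in_V_def)

lemma irreducible_prefix_mismatch:
  assumes irr: "irreducible_seq M a" and "1 \<le> m" and pos: "a (m - 1) > 0"
    and V_per: "in_V M (per (wminus (prefix_word a m)))"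
  shows "\<exists>k<m. a (m + k) \<noteq> M - a k"
proof (rule ccontr)
  assume "\<not> ?thesis"
  then have reflected: "\<forall>k<m. a (m + k) = M - a k" by auto
  define w where "w = prefix_word a m"
  define X where "X = per (wplus (wbar M w))"
  have "wbar M w \<noteq> []" "length (wbar M w) = m"
    using \<open>1 \<le> m\<close> by (auto simp: w_def prefix_word_def wbar_def)
  then have X: "X k = (if k = m - 1 then M - a k + 1 else M - a k)" if "k < m" for k
    using that by (simp add: X_def per_nth length_wplus nth_wplus wbar_def w_def prefix_word_def)
  have "lex_less (conc w X) a"
    using irr pos V_per \<open>1 \<le> m\<close> unfolding irreducible_seq_def w_def X_def by blast
  then obtain p where p: "lex_less_at (conc w X) a p" by (auto simp: lex_less_iff_at)
  have conc: "conc w X k = (if k < m then a k else X (k - m))" for k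
    by (simp add: conc_def w_def prefix_word_def)
  have "m \<le> p"
    using p conc by (metis lex_less_at_def less_irrefl not_le)
  then obtain d where d: "p = m + d" using le_Suc_ex by blast
  have before_d: "X k = a (m + k)" if "k < d" for k
    using p that conc[of "m + k"] by (simp add: lex_less_at_def d)
  have at_d: "X d < a (m + d)"
    using p conc[of "m + d"] by (simp add: lex_less_at_def d)
  show False
  proof (cases "d < m - 1")
    case True
    with at_d X[of d] reflected show False by simp
  next
    case False
    then have "X (m - 1) \<le> a (m + (m - 1))"
      using before_d[of "m - 1"] at_d by (cases "d = m - 1") auto
    moreover have "a (m + (m - 1)) = M - a (m - 1)" using reflected[rule_format, of "m - 1"] \<open>1 \<le> m\<close> by simp
    ultimately show False using X[of "m - 1"] \<open>1 \<le> m\<close> by simp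
  qed
qed

lemma no_reflected_border_after_mismatch:
  assumes V: "in_V M a" and bounded: "\<forall>k. a k \<le> M"
    and pos: "a (m - 1) > 0" and fund: "fundamental M (wminus (prefix_word a m))"
    and "k0 < m" and before_k0: "\<forall>k<k0. a (m + k) = M - a k" and at_k0: "M - a k0 < a (m + k0)"
  shows "\<not> reflected_border M a (m + k0 + 1) i"
proof
  assume "reflected_border M a (m + k0 + 1) i"
  then have i: "1 \<le> i" "i \<le> m + k0" and border: "\<forall>k<m + k0 + 1 - i. a (i + k) = M - a k"
    by (auto simp: reflected_border_def)
  consider "i < m" | "i = m" | "m < i" by linarith
  then show False
  proof cases
    case 1
    with i border have "reflected_border M a m i" by (auto simp: reflected_border_def)
    with 1 i pos fund show False using fundamental_imp_no_reflected_border[of m a M i] by simp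
  next
    case 2
    with border at_k0 show False by simp
  next
    case 3
    define j where "j = i - m"
    have j: "1 \<le> j" "j \<le> k0" "i = m + j" using 3 i by (auto simp: j_def)
    have "a (j + k) = a k" if "k < k0 - j" for k
    proof -
      have "a (i + k) = M - a k" using border that j by simp
      moreover have "a (m + (j + k)) = M - a (j + k)" using before_k0 that by simp
      ultimately show ?thesis using bounded j by (metis add.assoc diff_diff_cancel)
    qed
    moreover have "a (k0 - j) < a (j + (k0 - j))"
    proof -
      have "a (m + k0) = M - a (k0 - j)" using border[rule_format, of "k0 - j"] j by simp
      with at_k0 show ?thesis using j by simp
    qed
    ultimately have "lex_less_at a (shift a j) (k0 - j)"
      by (simp add: lex_less_at_def shift_def add.commute)
    moreover have "lex_le (shift a j) a" using V by (simp add: in_V_def)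
    ultimately show False by (auto simp: lex_le_iff_not_less lex_less_iff_at)
  qed
qed

lemma fundamental_prefix_step:
  assumes V: "in_V M a" and bounded: "\<forall>k. a k \<le> M" and irr: "irreducible_seq M a"
    and "1 \<le> m" and pos: "a (m - 1) > 0" and fund: "fundamental M (wminus (prefix_word a m))"
  shows "\<exists>n. m < n \<and> n \<le> 2 * m \<and> a (n - 1) > 0 \<and> fundamental M (wminus (prefix_word a n))"
proof -
  have "\<forall>k<length (wminus (prefix_word a m)). wminus (prefix_word a m) ! k \<le> M"
    using bounded \<open>1 \<le> m\<close>
    by (auto simp: length_wminus_prefix nth_wminus_prefix intro: le_trans[OF diff_le_self])
  with fund have "in_V M (per (wminus (prefix_word a m)))" by (rule in_V_per_fundamental)
  with irreducible_prefix_mismatch[OF irr \<open>1 \<le> m\<close> pos] obtain k0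
    where k0: "k0 < m" "a (m + k0) \<noteq> M - a k0" and before_k0: "\<forall>k<k0. a (m + k) = M - a k"
    using exists_least_iff[of "\<lambda>k. k < m \<and> a (m + k) \<noteq> M - a k"] by (metis order.strict_trans)
  have "lex_le (sbar M a) (shift a m)" using V by (simp add: in_V_def)
  with before_k0 k0(2) have at_k0: "M - a k0 < a (m + k0)"
    using lex_le_first_difference[of "sbar M a" "shift a m" k0] by (simp add: sbar_def shift_def add.commute)
  define n where "n = m + k0 + 1"
  have "a (n - 1) > 0" using at_k0 by (simp add: n_def)
  moreover have "fundamental M (wminus (prefix_word a n))"
    using no_reflected_border_imp_fundamental[OF V _ \<open>a (n - 1) > 0\<close>]
      no_reflected_border_after_mismatch[OF V bounded pos fund k0(1) before_k0 at_k0]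
      \<open>1 \<le> m\<close> by (simp add: n_def)
  ultimately show ?thesis using k0(1) by (intro exI[of _ n]) (simp add: n_def)
qed

definition digits_value :: "real \<Rightarrow> (nat \<Rightarrow> nat) \<Rightarrow> real" where
  "digits_value q x = (\<Sum>i. real (x i) / q ^ Suc i)"

lemma summable_digits:
  assumes "1 < q" and bounded: "\<forall>i. x i \<le> K"
  shows "summable (\<lambda>i. real (x i) / q ^ Suc i)"
proof (rule summable_comparison_test)
  show "summable (\<lambda>i. real K * (1 / q) ^ i)"
    using \<open>1 < q\<close> by (intro summable_mult summable_geometric) auto
  have "real (x i) / q ^ Suc i \<le> real K * (1 / q) ^ i" for i
  proof -
    have "real (x i) / q ^ Suc i \<le> real K / q ^ Suc i"
      using bounded \<open>1 < q\<close> by (intro divide_right_mono) auto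
    also have "\<dots> \<le> real K / q ^ i"
      using \<open>1 < q\<close> by (intro divide_left_mono) auto
    finally show ?thesis by (simp add: power_one_over)
  qed
  then show "\<exists>N. \<forall>n\<ge>N. norm (real (x n) / q ^ Suc n) \<le> real K * (1 / q) ^ n"
    using \<open>1 < q\<close> by auto
qed

lemma digits_value_sums:
  "1 < q \<Longrightarrow> \<forall>i. x i \<le> K \<Longrightarrow> (\<lambda>i. real (x i) / q ^ Suc i) sums digits_value q x"
  unfolding digits_value_def by (intro summable_sums summable_digits)

lemma digits_value_unfold:
  assumes "1 < q" "\<forall>i. x i \<le> K"
  shows "digits_value q x = (x 0 + digits_value q (shift x 1)) / q"
proof -
  have "(\<Sum>i. real (x (Suc i)) / q ^ Suc (Suc i)) = digits_value q x - x 0 / q"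
    using suminf_split_head[OF summable_digits[OF assms]] by (simp add: digits_value_def)
  moreover have "(\<Sum>i. real (x (Suc i)) / q ^ Suc (Suc i)) = digits_value q (shift x 1) / q"
    using suminf_divide[OF summable_digits[of q "shift x 1" K]] assms
    by (simp add: digits_value_def shift_def field_simps)
  ultimately show ?thesis by (simp add: add_divide_distrib)
qed

lemma digits_value_pos:
  assumes "1 < q" "\<forall>i. x i \<le> K" "x i \<noteq> 0"
  shows "0 < digits_value q x"
  unfolding digits_value_def using assms by (intro suminf_pos2[where i = i] summable_digits) auto

lemma first_digit_lt_digits_value:
  assumes "1 < q" "\<forall>i. x i \<le> K" "0 < i" "x i \<noteq> 0"
  shows "x 0 / q < digits_value q x"
proof -
  have "0 < digits_value q (shift x 1)"
    using assms digits_value_pos[of q "shift x 1" K "i - 1"] by (simp add: shift_def)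
  then show ?thesis
    using digits_value_unfold[OF assms(1,2)] assms(1) by (simp add: divide_strict_right_mono)
qed

lemma digits_value_strict_antimono:
  assumes "1 < q" "q < r" and bounded: "\<forall>i. x i \<le> K" and "x i \<noteq> 0"
  shows "digits_value r x < digits_value q x"
proof -
  have term_mono: "real (x n) / r ^ Suc n \<le> real (x n) / q ^ Suc n" for n
    using assms by (intro divide_left_mono power_mono mult_pos_pos) auto
  have "real (x i) / r ^ Suc i < real (x i) / q ^ Suc i"
    using assms by (intro divide_strict_left_mono power_strict_mono mult_pos_pos) auto
  then have "0 < (\<Sum>n. real (x n) / q ^ Suc n - real (x n) / r ^ Suc n)"
    using assms term_mono
    by (intro suminf_pos2[where i = i] summable_diff summable_digits) auto
  also have "\<dots> = digits_value q x - digits_value r x"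
    using assms unfolding digits_value_def by (intro suminf_diff[symmetric] summable_digits) auto
  finally show ?thesis by simp
qed

lemma digits_value_shift_eq:
  assumes "1 < q" "\<forall>i. x i \<le> K" "\<forall>i. y i \<le> K"
  shows "\<forall>k<n. x k = y k \<Longrightarrow> digits_value q x = digits_value q y
    \<Longrightarrow> digits_value q (shift x n) = digits_value q (shift y n)"
  using assms(2,3)
proof (induction n arbitrary: x y)
  case 0
  then show ?case by (simp add: shift_def)
next
  case (Suc n)
  have "digits_value q (shift x 1) = digits_value q (shift y 1)"
    using Suc.prems(2) \<open>1 < q\<close> Suc.prems(1)[rule_format, of 0]
      digits_value_unfold[OF \<open>1 < q\<close> Suc.prems(3)] digits_value_unfold[OF \<open>1 < q\<close> Suc.prems(4)]
    by (simp add: divide_cancel_right)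
  then have "digits_value q (shift (shift x 1) n) = digits_value q (shift (shift y 1) n)"
    using Suc.prems by (intro Suc.IH) (auto simp: shift_def)
  then show ?case by (simp add: shift_shift)
qed

lemma alpha_exp_bounded: "alpha_exp M q a \<Longrightarrow> \<forall>i. a i \<le> M"
  by (simp add: alpha_exp_def expansion_of_one_def in_Omega_def)

lemma expansion_of_one_value:
  assumes "1 < q" "expansion_of_one M q a"
  shows "digits_value q a = 1"
proof -
  have "\<forall>i. a i \<le> M" using assms(2) by (simp add: expansion_of_one_def in_Omega_def)
  with assms show ?thesis
    using digits_value_sums sums_unique2 by (metis expansion_of_one_def)
qed

lemma alpha_exp_unique_base:
  assumes "alpha_exp M q a" "alpha_exp M r a"
  shows "q = r"
proof -
  have "1 < q" "1 < r" "digits_value q a = 1" "digits_value r a = 1"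
    using assms expansion_of_one_value by (auto simp: alpha_exp_def)
  moreover obtain i where "a i \<noteq> 0"
    using assms(1) by (auto simp: alpha_exp_def expansion_of_one_def)
  ultimately show ?thesis
    using digits_value_strict_antimono[OF _ _ alpha_exp_bounded[OF assms(1)]]
    by (metis less_irrefl linorder_neqE_linordered_idom)
qed

lemma qT_eqI: "alpha_exp M t (alphaT M) \<Longrightarrow> qT M = t"
  unfolding qT_def by (blast intro: alpha_exp_unique_base)

definition seq_10 :: "nat \<Rightarrow> nat" where
  "seq_10 k = (if even k then 1 else 0)"

definition seq_1_10 :: "nat \<Rightarrow> nat" where
  "seq_1_10 k = (if k = 0 then 1 else seq_10 (k - 1))"

lemma alphaT_1: "alphaT 1 = seq_1_10"
proof -
  have "tau 1 = 1" "tau 2 = 1"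
    by (simp_all add: tau_def bitsum.simps[of 1] bitsum.simps[of 2])
  then have "alphaT 1 = conc [1, 1] (per (wplus (wbar 1 [1, 1])))"
    by (simp add: alphaT_def Let_def lamN_def lam_def upt_rec numeral_2_eq_2)
  moreover have "per (wplus (wbar 1 [1, 1])) j = (if even j then 0 else 1)" for j
    by (simp add: per_def wplus_def wbar_def nth_Cons' mod2_eq_if) presburger
  ultimately show ?thesis
    by (auto simp: fun_eq_iff conc_def nth_Cons' seq_1_10_def seq_10_def less_2_cases_iff)
qed

lemma shift_seq_1_10: "shift seq_1_10 1 = seq_10"
  by (simp add: fun_eq_iff shift_def seq_1_10_def)

lemma shift_shift_seq_10: "shift (shift seq_10 1) 1 = seq_10"
  unfolding fun_eq_iff shift_def seq_10_def by simp

lemma shift_seq_10_bounded: "\<forall>i. shift seq_10 n i \<le> 1"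
  by (simp add: shift_def seq_10_def)

lemma digits_value_shift_seq_10:
  assumes "1 < q"
  shows "digits_value q (shift seq_10 1) = digits_value q seq_10 / q"
proof -
  have "shift seq_10 1 0 = 0" by (simp add: shift_def seq_10_def)
  then show ?thesis
    using digits_value_unfold[OF assms shift_seq_10_bounded[of 1]] unfolding shift_shift_seq_10
    by simp
qed

lemma digits_value_seq_10:
  assumes "1 < q"
  shows "digits_value q seq_10 = q / (q\<^sup>2 - 1)"
proof -
  define V where "V = digits_value q seq_10"
  have "V = (1 + V / q) / q"
    using digits_value_unfold[OF assms, of seq_10 1] shift_seq_10_bounded[of 0]
      digits_value_shift_seq_10[OF assms]
    by (simp add: V_def seq_10_def shift_def)
  then have "V * (q\<^sup>2 - 1) = q"
    using assms by (simp add: field_simps power2_eq_square)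
  moreover have "q\<^sup>2 - 1 \<noteq> 0" using one_less_power[OF assms, of 2] by simp
  ultimately show ?thesis by (simp add: V_def eq_divide_eq)
qed

lemma seq_1_10_bounded: "\<forall>i. seq_1_10 i \<le> 1"
  by (simp add: seq_1_10_def seq_10_def)

lemma digits_value_seq_1_10:
  assumes "1 < q"
  shows "digits_value q seq_1_10 = 1 / q + 1 / (q\<^sup>2 - 1)"
proof -
  have "digits_value q seq_1_10 = (1 + q / (q\<^sup>2 - 1)) / q"
    using digits_value_unfold[OF assms seq_1_10_bounded] digits_value_seq_10[OF assms]
    unfolding shift_seq_1_10 by (simp add: seq_1_10_def[of 0])
  then show ?thesis using assms by (simp add: add_divide_distrib)
qed

lemma alpha_exp_seq_1_10:
  assumes "1 < t" "t \<le> 2" and root: "digits_value t seq_1_10 = 1"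
  shows "alpha_exp 1 t seq_1_10"
proof -
  have expansion: "expansion_of_one 1 t seq_1_10"
    unfolding expansion_of_one_def in_Omega_def
  proof (intro conjI allI)
    show "\<exists>i\<ge>n. seq_1_10 i \<noteq> 0" for n by (intro exI[of _ "2 * n + 1"]) (simp add: seq_1_10_def seq_10_def)
    show "(\<lambda>i. real (seq_1_10 i) / t ^ Suc i) sums 1"
      using digits_value_sums[OF \<open>1 < t\<close> seq_1_10_bounded] root by simp
  qed (simp add: seq_1_10_def seq_10_def)
  (* A larger expansion c first exceeds 1(10)^infinity at an even position n; from there on the
     tail of c would have to carry the value of (01)^infinity, which is at most 1/t, although
     it starts with the digit 1 and has further nonzero digits. *)
  have "lex_le c seq_1_10" if c: "expansion_of_one 1 t c" for c
  proof (rule ccontr)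
    assume "\<not> lex_le c seq_1_10"
    then obtain n where n: "lex_less_at seq_1_10 c n" by (auto simp: lex_le_iff_not_less lex_less_iff_at)
    have c_bounded: "\<forall>i. c i \<le> 1" using c by (simp add: expansion_of_one_def in_Omega_def)
    have "seq_1_10 n < c n" using n by (simp add: lex_less_at_def)
    with c_bounded[rule_format, of n] have "seq_1_10 n = 0" "c n = 1" by linarith+
    then have "even n" "n \<noteq> 0" by (auto simp: seq_1_10_def seq_10_def split: if_splits)
    have "digits_value t (shift c n) = digits_value t (shift seq_1_10 n)"
      using digits_value_shift_eq[OF \<open>1 < t\<close> c_bounded seq_1_10_bounded] n root
        expansion_of_one_value[OF \<open>1 < t\<close> c] by (simp add: lex_less_at_def)
    also have "shift seq_1_10 n = shift seq_10 1"
      using \<open>even n\<close> \<open>n \<noteq> 0\<close> by (auto simp: fun_eq_iff shift_def seq_1_10_def seq_10_def)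
    also have "digits_value t (shift seq_10 1) = (t - 1) / t"
    proof -
      have "digits_value t seq_10 = t - 1"
        using digits_value_seq_10[OF \<open>1 < t\<close>] digits_value_seq_1_10[OF \<open>1 < t\<close>] root \<open>1 < t\<close>
        by (simp add: field_simps)
      then show ?thesis using digits_value_shift_seq_10[OF \<open>1 < t\<close>] by simp
    qed
    also have "\<dots> \<le> 1 / t"
      using \<open>t \<le> 2\<close> \<open>1 < t\<close> by (simp add: divide_right_mono)
    finally have upper: "digits_value t (shift c n) \<le> 1 / t" .
    obtain i where "Suc n \<le> i" "c i \<noteq> 0"
      using c by (auto simp: expansion_of_one_def)
    then have "1 / t < digits_value t (shift c n)"
      using first_digit_lt_digits_value[OF \<open>1 < t\<close>, of "shift c n" 1 "i - n"] c_bounded \<open>c n = 1\<close>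
      by (simp add: shift_def)
    with upper show False by simp
  qed
  with expansion assms show ?thesis by (simp add: alpha_exp_def)
qed

lemma qT_1: "1 < qT 1 \<and> digits_value (qT 1) seq_1_10 = 1"
proof -
  define f where "f q = 1 / q + 1 / (q\<^sup>2 - 1)" for q :: real
  have "continuous_on {3/2..2} f"
  proof -
    have "x\<^sup>2 - 1 \<noteq> 0" if "3/2 \<le> x" for x :: real
      using one_less_power[of x 2] that by fastforce
    then show ?thesis unfolding f_def by (intro continuous_intros) auto
  qed
  moreover have "f 2 \<le> 1" "1 \<le> f (3/2)" by (simp_all add: f_def power2_eq_square)
  ultimately obtain t where t: "3/2 \<le> t" "t \<le> 2" "f t = 1"
    using IVT2'[of f 2 1 "3/2"] by auto
  then have "digits_value t seq_1_10 = 1"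
    using digits_value_seq_1_10[of t] by (simp add: f_def)
  moreover have "alpha_exp 1 t (alphaT 1)"
    unfolding alphaT_1 using alpha_exp_seq_1_10 t calculation by simp
  then have "qT 1 = t" by (rule qT_eqI)
  ultimately show ?thesis using t by simp
qed

lemma in_V_1_seq_10:
  assumes V: "in_V 1 a" and bounded: "\<forall>i. a i \<le> 1" and "a 0 = 1" "a 1 = 0"
  shows "a = seq_10"
proof
  fix k
  show "a k = seq_10 k"
  proof (induction k)
    case 0
    then show ?case using \<open>a 0 = 1\<close> by (simp add: seq_10_def)
  next
    case (Suc k)
    show ?case
    proof (cases "even k")
      case True
      with Suc.IH \<open>a 0 = 1\<close> have "shift a k 0 = a 0" by (simp add: shift_def seq_10_def)
      moreover have "lex_le (shift a k) a" using V by (simp add: in_V_def)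
      ultimately have "shift a k 1 \<le> a 1" by (rule lex_le_second_letter[rotated])
      with True \<open>a 1 = 0\<close> show ?thesis by (simp add: shift_def seq_10_def)
    next
      case False
      with Suc.IH \<open>a 0 = 1\<close> have "sbar 1 a 0 = shift a k 0" by (simp add: shift_def sbar_def seq_10_def)
      moreover have "lex_le (sbar 1 a) (shift a k)" using V by (simp add: in_V_def)
      ultimately have "sbar 1 a 1 \<le> shift a k 1" by (rule lex_le_second_letter[rotated])
      with False \<open>a 1 = 0\<close> bounded[rule_format, of "Suc k"] show ?thesis
        by (simp add: shift_def sbar_def seq_10_def)
    qed
  qed
qed

lemma alpha_exp_1_second_digit_pos:
  assumes "qT 1 < q" "alpha_exp 1 q a" "in_V 1 a" "a 0 = 1"
  shows "0 < a 1"
proof (rule ccontr)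
  assume "\<not> 0 < a 1"
  with assms have "a = seq_10" using in_V_1_seq_10 alpha_exp_bounded by blast
  moreover have "1 < q" using assms(2) by (simp add: alpha_exp_def)
  ultimately have "q / (q\<^sup>2 - 1) = 1"
    using assms(2) expansion_of_one_value digits_value_seq_10 by (metis alpha_exp_def)
  then have golden: "q\<^sup>2 - 1 = q" using \<open>1 < q\<close> by (simp add: divide_eq_1_iff)
  have "q < 2"
  proof (rule ccontr)
    assume "\<not> q < 2"
    then have "2 * q \<le> q * q" using mult_right_mono[of 2 q q] by simp
    with golden \<open>1 < q\<close> show False unfolding power2_eq_square by linarith
  qed
  have "1 < digits_value q seq_1_10"
    using digits_value_seq_1_10[OF \<open>1 < q\<close>] golden \<open>q < 2\<close> \<open>1 < q\<close> by simp
  moreover have "digits_value q seq_1_10 < digits_value (qT 1) seq_1_10"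
    using digits_value_strict_antimono[of "qT 1" q seq_1_10 1 0] qT_1 assms(1) seq_1_10_bounded
    by (simp add: seq_1_10_def)
  ultimately show False using qT_1 by simp
qed

lemma fundamental_first_letter:
  assumes "2 \<le> M" "a 0 = M"
  shows "fundamental M (wminus (prefix_word a 1))"
  using assms by (simp add: fundamental_def length_wminus_prefix nth_wminus_prefix)

lemma fundamental_first_two_letters:
  assumes "in_V M a" "a 0 = M" "0 < a 1"
  shows "fundamental M (wminus (prefix_word a 2))"
proof (rule no_reflected_border_imp_fundamental[OF assms(1)])
  show "\<not> reflected_border M a 2 i" for i
  proof
    assume "reflected_border M a 2 i"
    then have "i = 1" "\<forall>k<2 - i. a (i + k) = M - a k" unfolding reflected_border_def by auto
    then have "a 1 = M - a 0" by force
    with assms(2,3) show False by simp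
  qed
qed (use assms in auto)

theorem lemma4p2:
  fixes M :: nat and q :: real and a :: "nat \<Rightarrow> nat"
  assumes "M \<ge> 1"
    and "q > qT M"
    and "alpha_exp M q a"
    and "irreducible_seq M a"
    and "a 0 = M"
  shows "\<exists>m :: nat \<Rightarrow> nat. strict_mono m \<and> (\<forall>j. m j > 0)
           \<and> (\<forall>j. a (m j - 1) > 0 \<and> fundamental M (wminus (prefix_word a (m j))))
           \<and> (\<forall>j. m (Suc j) \<le> 2 * m j)
           \<and> m 0 = (if M = 1 then 2 else 1)"
proof -
  have bounded: "\<forall>k. a k \<le> M" using assms(3) by (rule alpha_exp_bounded)
  have V: "in_V M a" using assms(4) by (simp add: irreducible_seq_def)
  define admissible where "admissible m \<longleftrightarrow> 1 \<le> m \<and> 0 < a (m - 1) \<and> fundamental M (wminus (prefix_word a m))"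
    for m
  define m0 :: nat where "m0 = (if M = 1 then 2 else 1)"
  have "admissible m0"
  proof (cases "M = 1")
    case True
    with assms V have "0 < a 1" using alpha_exp_1_second_digit_pos[of q a] by simp
    with True show ?thesis using fundamental_first_two_letters[OF V assms(5)] by (simp add: admissible_def m0_def)
  next
    case False
    with assms(1,5) show ?thesis using fundamental_first_letter by (simp add: admissible_def m0_def)
  qed
  moreover have "\<exists>n. admissible n \<and> m < n \<and> n \<le> 2 * m" if "admissible m" for m
    using fundamental_prefix_step[OF V bounded assms(4)] that unfolding admissible_def by fastforce
  ultimately obtain m where
    "\<forall>j. (admissible (m j) \<and> (j = 0 \<longrightarrow> m j = m0)) \<and> m j < m (Suc j) \<and> m (Suc j) \<le> 2 * m j"
    using dependent_nat_choice[of "\<lambda>j n. admissible n \<and> (j = 0 \<longrightarrow> n = m0)" "\<lambda>_ n n'. n < n' \<and> n' \<le> 2 * n"]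
    by auto
  then have "strict_mono m" "\<forall>j. admissible (m j)" "\<forall>j. m (Suc j) \<le> 2 * m j" "m 0 = m0"
    by (auto simp: strict_mono_Suc_iff)
  moreover have "\<forall>j. 0 < m j" using \<open>\<forall>j. admissible (m j)\<close> by (simp add: admissible_def Suc_le_eq)
  ultimately show ?thesis unfolding admissible_def m0_def by blast
qed

end
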